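(* Let $\Gamma:=\mathrm{Cos}(G,H,A)$ be a vertex-transitive graph and let $B$ be a subset of $A$. If every $\varphi\in\mathrm{Aut}(\Gamma)_H$ fixes the set $\{Hx\mid x\in B\}$ pointwise, then every $\varphi\in\mathrm{Aut}(\Gamma)_H$ fixes the set $\{Hx\mid x\in\langle B\rangle\}$ pointwise.
   Context: $G$ is a finite group, $H\le G$, and $A\subseteq G$ is a union of $(H,H)$-double cosets with $A=A^{-1}$. The coset graph $\mathrm{Cos}(G,H,A)$ has vertex set the right cosets of $H$ in $G$, with $Hx$ adjacent to $Hy$ iff $yx^{-1}\in A$. $\mathrm{Aut}(\Gamma)_H$ denotes the stabilizer in $\mathrm{Aut}(\Gamma)$ of the vertex $H$. *)

theory Defs
  imports "HOL-Algebra.Algebra"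
begin

definition cos_adj :: "('a, 'b) monoid_scheme \<Rightarrow> 'a set \<Rightarrow> 'a set \<Rightarrow> 'a set \<Rightarrow> 'a set \<Rightarrow> bool" where
  "cos_adj G H A U W \<longleftrightarrow>
     (\<exists>x \<in> carrier G. \<exists>y \<in> carrier G.
        U = H #>\<^bsub>G\<^esub> x \<and> W = H #>\<^bsub>G\<^esub> y \<and> y \<otimes>\<^bsub>G\<^esub> inv\<^bsub>G\<^esub> x \<in> A)"

definition cos_aut :: "('a, 'b) monoid_scheme \<Rightarrow> 'a set \<Rightarrow> 'a set \<Rightarrow> ('a set \<Rightarrow> 'a set) set" where
  "cos_aut G H A =
     {f. bij_betw f (rcosets\<^bsub>G\<^esub> H) (rcosets\<^bsub>G\<^esub> H) \<and>
         (\<forall>U \<in> rcosets\<^bsub>G\<^esub> H. \<forall>W \<in> rcosets\<^bsub>G\<^esub> H.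
            cos_adj G H A U W \<longleftrightarrow> cos_adj G H A (f U) (f W))}"

definition cos_aut_stab :: "('a, 'b) monoid_scheme \<Rightarrow> 'a set \<Rightarrow> 'a set \<Rightarrow> ('a set \<Rightarrow> 'a set) set" where
  "cos_aut_stab G H A = {f \<in> cos_aut G H A. f H = H}"

definition cos_vertex_transitive :: "('a, 'b) monoid_scheme \<Rightarrow> 'a set \<Rightarrow> 'a set \<Rightarrow> bool" where
  "cos_vertex_transitive G H A \<longleftrightarrow>
     (\<forall>U \<in> rcosets\<^bsub>G\<^esub> H. \<forall>W \<in> rcosets\<^bsub>G\<^esub> H. \<exists>f \<in> cos_aut G H A. f U = W)"

definition union_double_cosets :: "('a, 'b) monoid_scheme \<Rightarrow> 'a set \<Rightarrow> 'a set \<Rightarrow> bool" where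
  "union_double_cosets G H A \<longleftrightarrow> A \<subseteq> carrier G \<and>
     (\<forall>a \<in> A. \<forall>h1 \<in> H. \<forall>h2 \<in> H. h1 \<otimes>\<^bsub>G\<^esub> a \<otimes>\<^bsub>G\<^esub> h2 \<in> A)"

end

theory Submission
  imports Defs
begin

text \<open>Right multiplication by g is an automorphism of Cos(G,H,A), and conjugating the
  stabiliser of the vertex H by it gives the stabiliser of H g. Hence the elements g whose
  vertex H g is fixed by the whole stabiliser form a submonoid of G: if \<phi> fixes H h, the
  conjugate of \<phi> by h fixes H g, i.e. \<phi> fixes H g h. A finite submonoid of a group is a
  subgroup, so it contains \<langle>B\<rangle> as soon as it contains B.\<close>

lemma (in group) finite_submonoid_imp_subgroup:
  assumes "submonoid S G" and "finite S"
  shows "subgroup S G"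
proof (rule submonoid_subgroupI[OF assms(1)])
  interpret S: submonoid S G by fact
  fix a assume a: "a \<in> S"
  have "inj_on ((\<otimes>) a) S"
    by (rule inj_onI) (use a S.subset l_cancel in blast)
  moreover have "(\<otimes>) a ` S \<subseteq> S" using a by auto
  ultimately have "(\<otimes>) a ` S = S" using endo_inj_surj assms(2) by blast
  then obtain b where b: "b \<in> S" "a \<otimes> b = \<one>"
    using S.one_closed by (metis imageE)
  have "a \<otimes> inv a = a \<otimes> b" using a b(2) S.subset by auto
  then have "inv a = b" using a b(1) S.subset l_cancel by blast
  then show "inv a \<in> S" using b by simp
qed

lemma (in group) r_coset_mult_in_rcosets:
  assumes "H \<subseteq> carrier G" "U \<in> rcosets H" "g \<in> carrier G"
  shows "U #> g \<in> rcosets H"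
proof -
  obtain x where "x \<in> carrier G" "U = H #> x" using assms(2) unfolding RCOSETS_def by auto
  then show ?thesis using assms by (simp add: coset_mult_assoc rcosetsI)
qed

lemma (in group) rcosets_subset_carrier:
  assumes "H \<subseteq> carrier G" "U \<in> rcosets H"
  shows "U \<subseteq> carrier G"
  using assms r_coset_subset_G unfolding RCOSETS_def by blast

lemma (in group) r_coset_mult_inv_cancel:
  assumes "U \<subseteq> carrier G" "g \<in> carrier G"
  shows "U #> g #> inv g = U" and "U #> inv g #> g = U"
  using assms by (simp_all add: coset_mult_assoc)

lemma (in group) cos_adj_r_coset_mult:
  assumes "H \<subseteq> carrier G" "g \<in> carrier G" "cos_adj G H A U W"
  shows "cos_adj G H A (U #> g) (W #> g)"
proof -
  obtain x y where xy: "x \<in> carrier G" "y \<in> carrier G" "U = H #> x" "W = H #> y"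
    "y \<otimes> inv x \<in> A" using assms(3) unfolding cos_adj_def by auto
  have "(y \<otimes> g) \<otimes> inv (x \<otimes> g) = y \<otimes> inv x"
    using xy assms(2) by (simp add: inv_mult_group m_assoc, simp add: m_assoc[symmetric])
  moreover have "U #> g = H #> (x \<otimes> g)" "W #> g = H #> (y \<otimes> g)"
    using xy assms(1,2) by (simp_all add: coset_mult_assoc)
  ultimately show ?thesis unfolding cos_adj_def using xy assms(2) by force
qed

lemma cos_aut_rcosets:
  assumes "f \<in> cos_aut G H A" "U \<in> rcosets\<^bsub>G\<^esub> H"
  shows "f U \<in> rcosets\<^bsub>G\<^esub> H"
proof -
  have "bij_betw f (rcosets\<^bsub>G\<^esub> H) (rcosets\<^bsub>G\<^esub> H)"
    using assms(1) unfolding cos_aut_def by simp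
  then show ?thesis using assms(2) bij_betwE by blast
qed

lemma cos_aut_comp:
  assumes f: "f \<in> cos_aut G H A" and h: "h \<in> cos_aut G H A"
  shows "f \<circ> h \<in> cos_aut G H A"
proof -
  have "bij_betw (f \<circ> h) (rcosets\<^bsub>G\<^esub> H) (rcosets\<^bsub>G\<^esub> H)"
    using f h bij_betw_trans unfolding cos_aut_def by blast
  moreover have "cos_adj G H A U W \<longleftrightarrow> cos_adj G H A (f (h U)) (f (h W))"
    if "U \<in> rcosets\<^bsub>G\<^esub> H" "W \<in> rcosets\<^bsub>G\<^esub> H" for U W
  proof -
    have "cos_adj G H A U W \<longleftrightarrow> cos_adj G H A (h U) (h W)"
      using h that unfolding cos_aut_def by blast
    also have "\<dots> \<longleftrightarrow> cos_adj G H A (f (h U)) (f (h W))"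
      using f that cos_aut_rcosets[OF h] unfolding cos_aut_def by blast
    finally show ?thesis .
  qed
  ultimately show ?thesis unfolding cos_aut_def by auto
qed

lemma (in group) r_coset_mult_in_cos_aut:
  assumes H: "H \<subseteq> carrier G" and g: "g \<in> carrier G"
  shows "(\<lambda>U. U #> g) \<in> cos_aut G H A"
proof -
  have cancel: "U #> g #> inv g = U" "U #> inv g #> g = U" if "U \<in> rcosets H" for U
    using r_coset_mult_inv_cancel rcosets_subset_carrier[OF H that] g by simp_all
  have "bij_betw (\<lambda>U. U #> g) (rcosets H) (rcosets H)"
    by (rule bij_betw_byWitness[where f' = "\<lambda>U. U #> inv g"])
      (use cancel r_coset_mult_in_rcosets H g in auto)
  moreover have "cos_adj G H A U W \<longleftrightarrow> cos_adj G H A (U #> g) (W #> g)"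
    if "U \<in> rcosets H" "W \<in> rcosets H" for U W
  proof
    assume "cos_adj G H A (U #> g) (W #> g)"
    then have "cos_adj G H A (U #> g #> inv g) (W #> g #> inv g)"
      using cos_adj_r_coset_mult H g by simp
    then show "cos_adj G H A U W" using cancel that by simp
  qed (use cos_adj_r_coset_mult H g in simp)
  ultimately show ?thesis unfolding cos_aut_def by blast
qed

lemma (in group) cos_aut_stab_conj_r_coset_mult:
  assumes H: "H \<subseteq> carrier G" and g: "g \<in> carrier G"
    and \<phi>: "\<phi> \<in> cos_aut_stab G H A" "\<phi> (H #> g) = H #> g"
  shows "(\<lambda>U. \<phi> (U #> g) #> inv g) \<in> cos_aut_stab G H A"
proof -
  have "(\<lambda>U. \<phi> (U #> g) #> inv g) = (\<lambda>U. U #> inv g) \<circ> \<phi> \<circ> (\<lambda>U. U #> g)" by auto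
  also have "\<dots> \<in> cos_aut G H A"
    using \<phi>(1) unfolding cos_aut_stab_def
    by (auto intro!: cos_aut_comp r_coset_mult_in_cos_aut H g)
  finally show ?thesis
    using \<phi>(2) r_coset_mult_inv_cancel(1) H g unfolding cos_aut_stab_def by simp
qed

definition cos_stab_fixed :: "('a, 'b) monoid_scheme \<Rightarrow> 'a set \<Rightarrow> 'a set \<Rightarrow> 'a set" where
  "cos_stab_fixed G H A =
     {g \<in> carrier G. \<forall>\<phi> \<in> cos_aut_stab G H A. \<phi> (H #>\<^bsub>G\<^esub> g) = H #>\<^bsub>G\<^esub> g}"

lemma cos_stab_fixedD:
  "g \<in> cos_stab_fixed G H A \<Longrightarrow> \<phi> \<in> cos_aut_stab G H A \<Longrightarrow> \<phi> (H #>\<^bsub>G\<^esub> g) = H #>\<^bsub>G\<^esub> g"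
  unfolding cos_stab_fixed_def by blast

lemma (in group) cos_stab_fixed_submonoid:
  assumes H: "H \<subseteq> carrier G"
  shows "submonoid (cos_stab_fixed G H A) G"
proof
  show "cos_stab_fixed G H A \<subseteq> carrier G" unfolding cos_stab_fixed_def by auto
  show "\<one> \<in> cos_stab_fixed G H A" using H unfolding cos_stab_fixed_def cos_aut_stab_def by simp
next
  fix g h assume g: "g \<in> cos_stab_fixed G H A" and h: "h \<in> cos_stab_fixed G H A"
  have gc: "g \<in> carrier G" and hc: "h \<in> carrier G"
    using g h unfolding cos_stab_fixed_def by auto
  have "\<phi> (H #> (g \<otimes> h)) = H #> (g \<otimes> h)" if \<phi>: "\<phi> \<in> cos_aut_stab G H A" for \<phi>
  proof -
    let ?V = "\<phi> (H #> (g \<otimes> h))"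
    have "(\<lambda>U. \<phi> (U #> h) #> inv h) \<in> cos_aut_stab G H A"
      by (rule cos_aut_stab_conj_r_coset_mult[OF H hc \<phi> cos_stab_fixedD[OF h \<phi>]])
    from cos_stab_fixedD[OF g this] have "\<phi> (H #> g #> h) #> inv h = H #> g" .
    then have "?V #> inv h = H #> g" using H gc hc by (simp add: coset_mult_assoc)
    moreover have "?V \<in> rcosets H"
      using \<phi> cos_aut_rcosets[OF _ rcosetsI[OF H m_closed[OF gc hc]]]
      unfolding cos_aut_stab_def by blast
    then have "?V \<subseteq> carrier G" by (rule rcosets_subset_carrier[OF H])
    ultimately have "?V = H #> g #> h" using r_coset_mult_inv_cancel(2)[of ?V h] hc by simp
    then show ?thesis using H gc hc by (simp add: coset_mult_assoc)
  qed
  then show "g \<otimes> h \<in> cos_stab_fixed G H A" using gc hc unfolding cos_stab_fixed_def by auto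
qed

theorem lemma3p5:
  fixes G :: "('a, 'b) monoid_scheme" and H A B :: "'a set"
  assumes "group G" and "finite (carrier G)"
    and "subgroup H G"
    and "union_double_cosets G H A"
    and "(\<lambda>a. inv\<^bsub>G\<^esub> a) ` A = A"
    and "cos_vertex_transitive G H A"
    and "B \<subseteq> A"
    and "\<forall>\<phi> \<in> cos_aut_stab G H A. \<forall>x \<in> B. \<phi> (H #>\<^bsub>G\<^esub> x) = H #>\<^bsub>G\<^esub> x"
  shows "\<forall>\<phi> \<in> cos_aut_stab G H A. \<forall>x \<in> generate G B. \<phi> (H #>\<^bsub>G\<^esub> x) = H #>\<^bsub>G\<^esub> x"
proof -
  interpret group G by fact
  have "H \<subseteq> carrier G" using assms(3) subgroup.subset by blast
  have "B \<subseteq> cos_stab_fixed G H A"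
    using assms(4,7,8) unfolding union_double_cosets_def cos_stab_fixed_def by auto
  moreover have "finite (cos_stab_fixed G H A)"
    by (rule finite_subset[OF _ assms(2)]) (simp add: cos_stab_fixed_def)
  then have "subgroup (cos_stab_fixed G H A) G"
    by (rule finite_submonoid_imp_subgroup[OF cos_stab_fixed_submonoid[OF \<open>H \<subseteq> carrier G\<close>]])
  ultimately have "generate G B \<subseteq> cos_stab_fixed G H A" by (rule generate_subgroup_incl)
  then show ?thesis unfolding cos_stab_fixed_def by blast
qed

end
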